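(* Let $N\ge1$ and $1\le\sigma_N\le CN^{1/2}$. Define $c_d=Z_N^{-1}e^{-d^2/4\sigma_N^2}$ if $N+d$ is even and $|d|\le\sigma_N^2$, and $c_d=0$ otherwise, with $Z_N>0$ such that $\sum_{|d|\le\sigma_N^2}|c_d|^2=1$. Then: (1) for every $n\in\mathbb N$ there is $C_n$ independent of $N$ and $\sigma_N$ with $\sum_{-\sigma_N^2\le d\le\sigma_N^2}d^{2n}|c_d|^2\le C_n\sigma_N^{2n}$, and $\sum_{-\sigma_N^2\le d\le\sigma_N^2}d^{2n+1}|c_d|^2=0$; (2) for every even integer $\kappa\in2\mathbb Z$ there is $C$ (depending on $\kappa$, not on $N,\sigma_N$) with $\Big|\sum_{-\sigma_N^2\le d\le\sigma_N^2-\kappa}c_dc_{d+\kappa}-1\Big|\le\frac{C}{\sigma_N^2}$.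
   Context: Here $d$ ranges over integers. *)

theory Defs
  imports Complex_Main
begin

definition gauss_weight :: "nat \<Rightarrow> real \<Rightarrow> int \<Rightarrow> real" where
  "gauss_weight N \<sigma> d =
     (if even (int N + d) \<and> real_of_int \<bar>d\<bar> \<le> \<sigma>\<^sup>2
      then exp (- (real_of_int d)\<^sup>2 / (4 * \<sigma>\<^sup>2)) else 0)"

definition norm_const :: "nat \<Rightarrow> real \<Rightarrow> real" where
  "norm_const N \<sigma> =
     sqrt (\<Sum>d\<in>{d::int. real_of_int \<bar>d\<bar> \<le> \<sigma>\<^sup>2}. (gauss_weight N \<sigma> d)\<^sup>2)"

definition coef :: "nat \<Rightarrow> real \<Rightarrow> int \<Rightarrow> real" where
  "coef N \<sigma> d = gauss_weight N \<sigma> d / norm_const N \<sigma>"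

end

theory Submission
  imports Defs
begin

text \<open>Write w for the unnormalised weights and g(x) = exp(-x^2/(4 \<sigma>^2)). The squared
  normalising constant Z^2 = \<Sum> w_d^2 is at least a constant times \<sigma>, so every claim reduces
  to bounding a sum of squared weights by O(\<sigma>). For the moments, x^{2n} g(x) <= (4 n \<sigma>^2)^n
  and g(x) <= e^{1/16} e^{-|x|/(4\<sigma>)} reduce the sum to a geometric series of size O(\<sigma>);
  odd moments vanish by the symmetry d \<mapsto> -d. For the shift, normalisation gives
  \<Sum> c_d c_{d+\<kappa>} = 1 - (1/2) \<Sum> (c_d - c_{d+\<kappa>})^2. Since \<kappa> is even, w_d and w_{d+\<kappa>}
  have the same parity factor; the mean value theorem bounds (w_d - w_{d+\<kappa>})^2 by
  O(\<sigma>^{-2} e^{-|d|/(8\<sigma>)}) inside the window, and at its edge |d| ~ \<sigma>^2 the Gaussian is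
  already smaller than that. Summing gives O(\<sigma>^{-1}), hence O(\<sigma>^{-2}) after division by Z^2.\<close>

lemma finite_int_abs_le: "finite {d::int. real_of_int \<bar>d\<bar> \<le> R}"
proof (rule finite_subset)
  show "{d::int. real_of_int \<bar>d\<bar> \<le> R} \<subseteq> {-\<lceil>R\<rceil>..\<lceil>R\<rceil>}"
  proof
    fix d :: int
    assume "d \<in> {d. real_of_int \<bar>d\<bar> \<le> R}"
    then have "\<bar>d\<bar> \<le> \<lceil>R\<rceil>"
      unfolding le_ceiling_iff by simp
    then show "d \<in> {-\<lceil>R\<rceil>..\<lceil>R\<rceil>}" by auto
  qed
qed simp

lemma sum_power_abs_le:
  fixes q :: real
  assumes "0 \<le> q" "q < 1" "finite S"
  shows "(\<Sum>d\<in>S. q ^ nat \<bar>d\<bar>) \<le> 2 / (1 - q)"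
proof -
  have half: "(\<Sum>d\<in>S \<inter> P. q ^ nat \<bar>d\<bar>) \<le> 1 / (1 - q)"
    if "inj_on (\<lambda>d. nat \<bar>d\<bar>) P" for P
  proof -
    have "(\<Sum>d\<in>S \<inter> P. q ^ nat \<bar>d\<bar>) = (\<Sum>k\<in>(\<lambda>d. nat \<bar>d\<bar>) ` (S \<inter> P). q ^ k)"
      using that by (simp add: sum.reindex inj_on_Int)
    also have "\<dots> \<le> (\<Sum>k. q ^ k)"
      using assms by (intro sum_le_suminf summable_geometric) auto
    also have "\<dots> = 1 / (1 - q)"
      using assms by (simp add: suminf_geometric)
    finally show ?thesis .
  qed
  have "(\<Sum>d\<in>S. q ^ nat \<bar>d\<bar>) = (\<Sum>d\<in>S \<inter> {0..}. q ^ nat \<bar>d\<bar>) + (\<Sum>d\<in>S \<inter> {..<0}. q ^ nat \<bar>d\<bar>)"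
    using assms(3) by (subst sum.union_disjoint[symmetric]) (auto intro: sum.cong)
  also have "\<dots> \<le> 1 / (1 - q) + 1 / (1 - q)"
    by (intro add_mono half) (auto simp: inj_on_def)
  finally show ?thesis by simp
qed

lemma one_div_one_minus_exp_le:
  fixes a :: real
  assumes "a > 0"
  shows "1 / (1 - exp (- a)) \<le> 1 + 1 / a"
proof -
  have "exp (- a) * (1 + a) \<le> 1"
    using exp_ge_add_one_self[of a] by (simp add: exp_minus field_simps)
  then have "a / (1 + a) \<le> 1 - exp (- a)"
    using assms by (simp add: field_simps)
  moreover have "0 < a / (1 + a)" using assms by simp
  ultimately have "1 / (1 - exp (- a)) \<le> 1 / (a / (1 + a))"
    using assms by (intro divide_left_mono mult_pos_pos) auto
  also have "\<dots> = 1 + 1 / a" using assms by (simp add: field_simps)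
  finally show ?thesis .
qed

lemma sum_exp_neg_abs_div_le:
  fixes s :: real
  assumes "finite S" "s > 0"
  shows "(\<Sum>d\<in>S. exp (- real_of_int \<bar>d\<bar> / s)) \<le> 2 * (1 + s)"
proof -
  have "exp (- real_of_int \<bar>d\<bar> / s) = exp (- (1 / s)) ^ nat \<bar>d\<bar>" for d :: int
    by (simp flip: exp_of_nat_mult)
  then have "(\<Sum>d\<in>S. exp (- real_of_int \<bar>d\<bar> / s)) \<le> 2 / (1 - exp (- (1 / s)))"
    using assms by (simp add: sum_power_abs_le)
  also have "\<dots> \<le> 2 * (1 + s)"
    using one_div_one_minus_exp_le[of "1 / s"] assms by simp
  finally show ?thesis .
qed

lemma power_le_power_mult_exp:
  fixes y :: real
  assumes "y \<ge> 0"
  shows "y ^ n \<le> real n ^ n * exp y"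
proof (cases "n = 0")
  case False
  then have "real n > 0" by simp
  have "(y / n) ^ n \<le> exp (y / n) ^ n"
    using assms exp_ge_add_one_self[of "y / n"] by (intro power_mono) (auto simp del: exp_ge_add_one_self)
  also have "\<dots> = exp y" using \<open>real n > 0\<close> by (simp flip: exp_of_nat_mult)
  finally show ?thesis using \<open>real n > 0\<close> by (simp add: power_divide field_simps)
qed (use assms in simp)

lemma sum_mult_eq_1_minus_half_sum_diff_squared:
  fixes f g :: "'a \<Rightarrow> real"
  assumes "(\<Sum>x\<in>A. (f x)\<^sup>2) = 1" "(\<Sum>x\<in>A. (g x)\<^sup>2) = 1"
  shows "(\<Sum>x\<in>A. f x * g x) = 1 - (\<Sum>x\<in>A. (f x - g x)\<^sup>2) / 2"
proof -
  have "(\<Sum>x\<in>A. (f x - g x)\<^sup>2)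
      = (\<Sum>x\<in>A. (f x)\<^sup>2) + (\<Sum>x\<in>A. (g x)\<^sup>2) - 2 * (\<Sum>x\<in>A. f x * g x)"
    by (simp add: power2_diff sum.distrib sum_subtractf sum_distrib_left mult.assoc)
  then show ?thesis using assms by (simp add: field_simps)
qed

lemma sum_diff_squared_le:
  fixes f g :: "'a \<Rightarrow> real"
  shows "(\<Sum>x\<in>A. (f x - g x)\<^sup>2) \<le> 2 * (\<Sum>x\<in>A. (f x)\<^sup>2) + 2 * (\<Sum>x\<in>A. (g x)\<^sup>2)"
proof -
  have "(\<Sum>x\<in>A. (f x - g x)\<^sup>2) \<le> (\<Sum>x\<in>A. 2 * (f x)\<^sup>2 + 2 * (g x)\<^sup>2)"
  proof (rule sum_mono)
    show "(f x - g x)\<^sup>2 \<le> 2 * (f x)\<^sup>2 + 2 * (g x)\<^sup>2" for x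
      using zero_le_power2[of "f x + g x"] by (simp add: power2_diff power2_sum)
  qed
  also have "\<dots> = 2 * (\<Sum>x\<in>A. (f x)\<^sup>2) + 2 * (\<Sum>x\<in>A. (g x)\<^sup>2)"
    by (simp add: sum.distrib sum_distrib_left)
  finally show ?thesis .
qed

lemma mean_value_between:
  fixes f :: "real \<Rightarrow> real"
  assumes "\<And>x. DERIV f x :> f' x"
  shows "\<exists>z. \<bar>z - a\<bar> \<le> \<bar>a - b\<bar> \<and> f a - f b = (a - b) * f' z"
proof (cases a b rule: linorder_cases)
  case less
  then obtain z where "a < z" "z < b" "f b - f a = (b - a) * f' z"
    using MVT2[OF less assms] by blast
  then show ?thesis by (intro exI[of _ z]) (auto simp: algebra_simps)
next
  case greater
  then obtain z where "b < z" "z < a" "f a - f b = (a - b) * f' z"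
    using MVT2[OF greater assms] by blast
  then show ?thesis by (intro exI[of _ z]) auto
qed auto

definition gauss :: "real \<Rightarrow> real \<Rightarrow> real" where
  "gauss \<sigma> x = exp (- x\<^sup>2 / (4 * \<sigma>\<^sup>2))"

lemma gauss_pos: "gauss \<sigma> x > 0"
  by (simp add: gauss_def)

lemma gauss_squared: "(gauss \<sigma> x)\<^sup>2 = exp (- x\<^sup>2 / (2 * \<sigma>\<^sup>2))"
  unfolding gauss_def power2_eq_square[of "exp _"] exp_add[symmetric] by (simp add: field_simps)

lemma has_field_derivative_gauss:
  assumes "\<sigma> \<noteq> 0"
  shows "DERIV (gauss \<sigma>) x :> - (gauss \<sigma> x * x / (2 * \<sigma>\<^sup>2))"
  unfolding gauss_def[abs_def] using assms
  by (auto intro!: derivative_eq_intros simp: field_simps power2_eq_square)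

lemma gauss_le_exp_abs:
  assumes "\<sigma> > 0"
  shows "gauss \<sigma> x \<le> exp (1/16) * exp (- \<bar>x\<bar> / (4 * \<sigma>))"
proof -
  define u where "u = \<bar>x\<bar> / \<sigma>"
  have "- u\<^sup>2 / 4 \<le> 1/16 - u / 4"
    using zero_le_power2[of "u / 2 - 1 / 4"] by (simp add: power2_eq_square algebra_simps)
  moreover have "u\<^sup>2 = x\<^sup>2 / \<sigma>\<^sup>2" "u / 4 = \<bar>x\<bar> / (4 * \<sigma>)"
    unfolding u_def by (simp_all add: power_divide)
  ultimately show ?thesis
    unfolding gauss_def exp_add[symmetric] by simp
qed

lemma power_mult_gauss_le:
  assumes "\<sigma> > 0"
  shows "x ^ (2 * n) * gauss \<sigma> x \<le> (4 * real n) ^ n * \<sigma> ^ (2 * n)"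
proof -
  define y where "y = x\<^sup>2 / (4 * \<sigma>\<^sup>2)"
  have "x ^ (2 * n) = (4 * \<sigma>\<^sup>2) ^ n * y ^ n"
    using assms by (simp add: y_def power_mult power_mult_distrib power_divide)
  moreover have "gauss \<sigma> x = exp (- y)"
    by (simp add: gauss_def y_def)
  moreover have "y ^ n * exp (- y) \<le> real n ^ n"
  proof -
    have "y ^ n \<le> real n ^ n * exp y"
      by (rule power_le_power_mult_exp) (simp add: y_def)
    then show ?thesis by (simp add: exp_minus pos_divide_le_eq flip: divide_inverse)
  qed
  ultimately have "x ^ (2 * n) * gauss \<sigma> x \<le> (4 * \<sigma>\<^sup>2) ^ n * real n ^ n"
    by (simp add: mult.assoc mult_left_mono)
  also have "(4 * \<sigma>\<^sup>2) ^ n * real n ^ n = (4 * real n) ^ n * \<sigma> ^ (2 * n)"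
    unfolding power_mult power_mult_distrib by (simp only: mult_ac)
  finally show ?thesis .
qed

lemma gauss_diff_squared_le:
  assumes "\<sigma> > 0"
  shows "(gauss \<sigma> a - gauss \<sigma> b)\<^sup>2
    \<le> (a - b)\<^sup>2 / \<sigma>\<^sup>2 * exp (1/16) * exp (- (\<bar>a\<bar> - \<bar>a - b\<bar>) / (4 * \<sigma>))"
proof -
  obtain z where z: "\<bar>z - a\<bar> \<le> \<bar>a - b\<bar>"
    and mvt: "gauss \<sigma> a - gauss \<sigma> b = (a - b) * - (gauss \<sigma> z * z / (2 * \<sigma>\<^sup>2))"
    using mean_value_between[OF has_field_derivative_gauss] assms by (metis less_irrefl)
  have "z ^ (2 * 1) * gauss \<sigma> z \<le> 4 * \<sigma>\<^sup>2"
    using power_mult_gauss_le[OF assms, of z 1] by simp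
  then have "(gauss \<sigma> z * z / (2 * \<sigma>\<^sup>2))\<^sup>2 \<le> gauss \<sigma> z / \<sigma>\<^sup>2"
    using assms gauss_pos[of \<sigma> z]
    by (simp add: power_divide power_mult_distrib field_simps power2_eq_square)
  also have "\<dots> \<le> exp (1/16) * exp (- \<bar>z\<bar> / (4 * \<sigma>)) / \<sigma>\<^sup>2"
    by (intro divide_right_mono gauss_le_exp_abs assms) simp
  also have "\<dots> \<le> exp (1/16) * exp (- (\<bar>a\<bar> - \<bar>a - b\<bar>) / (4 * \<sigma>)) / \<sigma>\<^sup>2"
  proof -
    have "- \<bar>z\<bar> / (4 * \<sigma>) \<le> - (\<bar>a\<bar> - \<bar>a - b\<bar>) / (4 * \<sigma>)"
      using z assms by (intro divide_right_mono) auto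
    then show ?thesis by (intro divide_right_mono mult_left_mono) auto
  qed
  finally have "(gauss \<sigma> z * z / (2 * \<sigma>\<^sup>2))\<^sup>2 \<le> \<dots>" .
  then have "(a - b)\<^sup>2 * (gauss \<sigma> z * z / (2 * \<sigma>\<^sup>2))\<^sup>2
      \<le> (a - b)\<^sup>2 * (exp (1/16) * exp (- (\<bar>a\<bar> - \<bar>a - b\<bar>) / (4 * \<sigma>)) / \<sigma>\<^sup>2)"
    by (rule mult_left_mono) simp
  moreover have "(gauss \<sigma> a - gauss \<sigma> b)\<^sup>2 = (a - b)\<^sup>2 * (gauss \<sigma> z * z / (2 * \<sigma>\<^sup>2))\<^sup>2"
    unfolding mvt by (simp only: power_mult_distrib power2_minus)
  ultimately show ?thesis by (simp add: ac_simps)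
qed

lemma gauss_squared_tail_le:
  assumes "\<sigma> \<ge> 1" "\<bar>t\<bar> \<ge> \<sigma>\<^sup>2 / 2"
  shows "(gauss \<sigma> t)\<^sup>2 \<le> 16 / \<sigma>\<^sup>2 * exp (- \<bar>t\<bar> / 8)"
proof -
  have "\<bar>t\<bar> * (\<sigma>\<^sup>2 / 2) \<le> \<bar>t\<bar> * \<bar>t\<bar>"
    using assms by (intro mult_left_mono) auto
  then have "\<bar>t\<bar> * (\<sigma>\<^sup>2 / 2) \<le> t\<^sup>2"
    by (simp add: power2_eq_square)
  then have "\<bar>t\<bar> / 4 \<le> t\<^sup>2 / (2 * \<sigma>\<^sup>2)"
    using assms by (simp add: field_simps)
  then have "(gauss \<sigma> t)\<^sup>2 \<le> exp (- \<bar>t\<bar> / 8) * exp (- \<bar>t\<bar> / 8)"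
    unfolding gauss_squared exp_add[symmetric] by simp
  also have "\<dots> \<le> 16 / \<sigma>\<^sup>2 * exp (- \<bar>t\<bar> / 8)"
  proof (rule mult_right_mono)
    have "\<sigma>\<^sup>2 / 16 \<le> exp (\<sigma>\<^sup>2 / 16)"
      using exp_ge_add_one_self[of "\<sigma>\<^sup>2 / 16"] by linarith
    then have "exp (- \<sigma>\<^sup>2 / 16) \<le> 16 / \<sigma>\<^sup>2"
      using assms by (simp add: exp_minus field_simps)
    moreover have "exp (- \<bar>t\<bar> / 8) \<le> exp (- \<sigma>\<^sup>2 / 16)"
      using assms by simp
    ultimately show "exp (- \<bar>t\<bar> / 8) \<le> 16 / \<sigma>\<^sup>2" by linarith
  qed simp
  finally show ?thesis .
qed

lemma power_mult_gauss_squared_le: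
  assumes "\<sigma> > 0"
  shows "x ^ (2 * n) * (gauss \<sigma> x)\<^sup>2
    \<le> (4 * real n) ^ n * \<sigma> ^ (2 * n) * exp (1/16) * exp (- \<bar>x\<bar> / (4 * \<sigma>))"
proof -
  have "x ^ (2 * n) * (gauss \<sigma> x)\<^sup>2 = (x ^ (2 * n) * gauss \<sigma> x) * gauss \<sigma> x"
    by (simp add: power2_eq_square)
  also have "\<dots> \<le> (4 * real n) ^ n * \<sigma> ^ (2 * n) * gauss \<sigma> x"
    using power_mult_gauss_le[OF assms] gauss_pos[of \<sigma> x] by (intro mult_right_mono) auto
  also have "\<dots> \<le> (4 * real n) ^ n * \<sigma> ^ (2 * n) * (exp (1/16) * exp (- \<bar>x\<bar> / (4 * \<sigma>)))"
    using assms by (intro mult_left_mono gauss_le_exp_abs) auto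
  finally show ?thesis by (simp add: mult.assoc)
qed

lemma gauss_shift_diff_squared_le:
  assumes "\<sigma> \<ge> 1"
  shows "(gauss \<sigma> x - gauss \<sigma> (x + k))\<^sup>2
    \<le> k\<^sup>2 * exp (1/16 + \<bar>k\<bar> / 4) / \<sigma>\<^sup>2 * exp (- \<bar>x\<bar> / (8 * \<sigma>))"
proof -
  have "\<bar>k\<bar> / (4 * \<sigma>) \<le> \<bar>k\<bar> / 4" "\<bar>x\<bar> / (8 * \<sigma>) \<le> \<bar>x\<bar> / (4 * \<sigma>)"
    by (intro divide_left_mono; use assms in simp)+
  then have "- (\<bar>x\<bar> - \<bar>k\<bar>) / (4 * \<sigma>) \<le> \<bar>k\<bar> / 4 - \<bar>x\<bar> / (8 * \<sigma>)"
    by (simp add: diff_divide_distrib)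
  then have "exp (1/16) * exp (- (\<bar>x\<bar> - \<bar>k\<bar>) / (4 * \<sigma>))
      \<le> exp (1/16 + \<bar>k\<bar> / 4) * exp (- \<bar>x\<bar> / (8 * \<sigma>))"
    by (simp flip: exp_add)
  then have "k\<^sup>2 / \<sigma>\<^sup>2 * (exp (1/16) * exp (- (\<bar>x\<bar> - \<bar>k\<bar>) / (4 * \<sigma>)))
      \<le> k\<^sup>2 / \<sigma>\<^sup>2 * (exp (1/16 + \<bar>k\<bar> / 4) * exp (- \<bar>x\<bar> / (8 * \<sigma>)))"
    by (rule mult_left_mono) simp
  moreover have "(gauss \<sigma> x - gauss \<sigma> (x + k))\<^sup>2
      \<le> k\<^sup>2 / \<sigma>\<^sup>2 * exp (1/16) * exp (- (\<bar>x\<bar> - \<bar>k\<bar>) / (4 * \<sigma>))"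
    using gauss_diff_squared_le[of \<sigma> x "x + k"] assms by simp
  ultimately show ?thesis by (simp add: mult_ac)
qed

lemma gauss_squared_tail_shift_le:
  assumes "\<sigma> \<ge> 1" "\<bar>t\<bar> \<ge> \<sigma>\<^sup>2 / 2" "\<bar>t - x\<bar> \<le> k"
  shows "(gauss \<sigma> t)\<^sup>2 \<le> 16 * exp (k / 8) / \<sigma>\<^sup>2 * exp (- \<bar>x\<bar> / (8 * \<sigma>))"
proof -
  have "\<bar>x\<bar> / (8 * \<sigma>) \<le> \<bar>x\<bar> / 8"
    using assms by (intro divide_left_mono) auto
  then have "exp (- \<bar>t\<bar> / 8) \<le> exp (k / 8) * exp (- \<bar>x\<bar> / (8 * \<sigma>))"
    using assms(3) by (simp flip: exp_add)
  then have "16 / \<sigma>\<^sup>2 * exp (- \<bar>t\<bar> / 8) \<le> 16 / \<sigma>\<^sup>2 * (exp (k / 8) * exp (- \<bar>x\<bar> / (8 * \<sigma>)))"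
    by (rule mult_left_mono) simp
  then show ?thesis
    using gauss_squared_tail_le[OF assms(1,2)] by simp
qed

abbreviation gauss_window :: "real \<Rightarrow> int set" where
  "gauss_window \<sigma> \<equiv> {d. real_of_int \<bar>d\<bar> \<le> \<sigma>\<^sup>2}"

lemma gauss_weight_eq_gauss:
  "gauss_weight N \<sigma> d =
     (if even (int N + d) \<and> real_of_int \<bar>d\<bar> \<le> \<sigma>\<^sup>2 then gauss \<sigma> (real_of_int d) else 0)"
  by (simp add: gauss_weight_def gauss_def)

lemma gauss_weight_eq_0: "\<sigma>\<^sup>2 < real_of_int \<bar>d\<bar> \<Longrightarrow> gauss_weight N \<sigma> d = 0"
  by (simp add: gauss_weight_def)

lemma gauss_weight_minus: "gauss_weight N \<sigma> (- d) = gauss_weight N \<sigma> d"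
  by (simp add: gauss_weight_def)

lemma gauss_weight_squared_le: "(gauss_weight N \<sigma> d)\<^sup>2 \<le> (gauss \<sigma> (real_of_int d))\<^sup>2"
  by (simp add: gauss_weight_eq_gauss)

lemma coef_eq_0: "\<sigma>\<^sup>2 < real_of_int \<bar>d\<bar> \<Longrightarrow> coef N \<sigma> d = 0"
  by (simp add: coef_def gauss_weight_eq_0)

lemma coef_minus: "coef N \<sigma> (- d) = coef N \<sigma> d"
  by (simp add: coef_def gauss_weight_minus)

lemma norm_const_squared: "(norm_const N \<sigma>)\<^sup>2 = (\<Sum>d\<in>gauss_window \<sigma>. (gauss_weight N \<sigma> d)\<^sup>2)"
  by (simp add: norm_const_def sum_nonneg)

text \<open>The integers of the parity of N in [0, \<sigma>] are at least \<sigma>/3 in number and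
  each carries squared weight at least e^{-1/2}.\<close>
lemma norm_const_squared_ge:
  assumes "\<sigma> \<ge> 1"
  shows "\<sigma> / (3 * exp (1/2)) \<le> (norm_const N \<sigma>)\<^sup>2"
proof -
  define p :: int where "p = (if even N then 0 else 1)"
  define J where "J = nat \<lfloor>(\<sigma> + 1) / 2\<rfloor>"
  define f where "f j = p + 2 * int j" for j
  have J: "1 \<le> real J" "real J \<le> (\<sigma> + 1) / 2" "(\<sigma> + 1) / 2 - 1 \<le> real J"
    using assms of_int_floor_le[of "(\<sigma> + 1) / 2"] real_of_int_floor_gt_diff_one[of "(\<sigma> + 1) / 2"]
    by (simp_all add: J_def le_floor_iff)
  have f_mem: "f j \<in> gauss_window \<sigma> \<and> exp (- 1/2) \<le> (gauss_weight N \<sigma> (f j))\<^sup>2" if "j < J" for j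
  proof -
    have "0 \<le> real_of_int (f j)" "real_of_int (f j) \<le> \<sigma>"
      using that J by (auto simp: f_def p_def)
    moreover have "\<sigma> \<le> \<sigma>\<^sup>2"
      using assms by (simp add: power2_eq_square)
    moreover have "even (int N + f j)"
      by (simp add: f_def p_def)
    moreover have "(real_of_int (f j))\<^sup>2 \<le> \<sigma>\<^sup>2"
      using calculation by (intro power_mono) auto
    ultimately show ?thesis
      using assms by (simp add: gauss_weight_eq_gauss gauss_squared field_simps)
  qed
  have "inj f" by (simp add: f_def inj_def)
  have "real J * exp (- 1/2) = (\<Sum>j<J. exp (- 1/2))"
    by simp
  also have "\<dots> \<le> (\<Sum>j<J. (gauss_weight N \<sigma> (f j))\<^sup>2)"
    using f_mem by (intro sum_mono) auto
  also have "\<dots> = (\<Sum>d\<in>f ` {..<J}. (gauss_weight N \<sigma> d)\<^sup>2)"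
    using \<open>inj f\<close> by (simp add: sum.reindex inj_on_subset)
  also have "\<dots> \<le> (norm_const N \<sigma>)\<^sup>2"
    unfolding norm_const_squared using f_mem by (intro sum_mono2 finite_int_abs_le) auto
  finally have "real J * exp (- 1/2) \<le> (norm_const N \<sigma>)\<^sup>2" .
  moreover have "\<sigma> \<le> 3 * real J"
    using J by argo
  ultimately show ?thesis
    by (simp add: exp_minus field_simps)
qed

lemma norm_const_squared_pos:
  assumes "\<sigma> \<ge> 1"
  shows "0 < (norm_const N \<sigma>)\<^sup>2"
  by (rule less_le_trans[OF _ norm_const_squared_ge[OF assms]]) (use assms in simp)

lemma divide_norm_const_squared_le:
  assumes "\<sigma> \<ge> 1" "0 \<le> x" "x \<le> A * \<sigma>"
  shows "x / (norm_const N \<sigma>)\<^sup>2 \<le> 3 * exp (1/2) * A"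
proof -
  have "x / (norm_const N \<sigma>)\<^sup>2 \<le> A * \<sigma> / (\<sigma> / (3 * exp (1/2)))"
    using assms norm_const_squared_ge[OF assms(1)]
    by (intro frac_le) auto
  also have "\<dots> = 3 * exp (1/2) * A"
    using assms by simp
  finally show ?thesis .
qed

lemma sum_coef_squared:
  assumes "\<sigma> \<ge> 1" "finite U" "gauss_window \<sigma> \<subseteq> U"
  shows "(\<Sum>d\<in>U. (coef N \<sigma> d)\<^sup>2) = 1"
proof -
  have "(\<Sum>d\<in>U. (coef N \<sigma> d)\<^sup>2) = (\<Sum>d\<in>gauss_window \<sigma>. (coef N \<sigma> d)\<^sup>2)"
    using assms by (intro sum.mono_neutral_right) (auto simp: coef_eq_0)
  also have "\<dots> = (\<Sum>d\<in>gauss_window \<sigma>. (gauss_weight N \<sigma> d)\<^sup>2) / (norm_const N \<sigma>)\<^sup>2"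
    by (simp add: coef_def power_divide sum_divide_distrib)
  also have "\<dots> = 1"
    using norm_const_squared_pos[OF assms(1), of N] by (simp add: norm_const_squared)
  finally show ?thesis .
qed

lemma sum_odd_power_coef_squared:
  "(\<Sum>d\<in>gauss_window \<sigma>. (real_of_int d) ^ (2 * n + 1) * (coef N \<sigma> d)\<^sup>2) = 0"
proof -
  let ?g = "\<lambda>d::int. (real_of_int d) ^ (2 * n + 1) * (coef N \<sigma> d)\<^sup>2"
  have "(\<Sum>d\<in>gauss_window \<sigma>. ?g d) = (\<Sum>d\<in>gauss_window \<sigma>. ?g (- d))"
    by (rule sum.reindex_bij_witness[of _ uminus uminus]) auto
  also have "\<dots> = - (\<Sum>d\<in>gauss_window \<sigma>. ?g d)"
    by (simp add: coef_minus flip: sum_negf)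
  finally show ?thesis by simp
qed

lemma sum_even_power_coef_squared_le:
  assumes "\<sigma> \<ge> 1"
  shows "(\<Sum>d\<in>gauss_window \<sigma>. (real_of_int d) ^ (2 * n) * (coef N \<sigma> d)\<^sup>2)
    \<le> 30 * exp (1/2) * exp (1/16) * (4 * real n) ^ n * \<sigma> ^ (2 * n)"
proof -
  define M where "M = (4 * real n) ^ n * \<sigma> ^ (2 * n) * exp (1/16)"
  have "M \<ge> 0" using assms by (simp add: M_def)
  have "(\<Sum>d\<in>gauss_window \<sigma>. (real_of_int d) ^ (2 * n) * (gauss_weight N \<sigma> d)\<^sup>2)
      \<le> (\<Sum>d\<in>gauss_window \<sigma>. M * exp (- real_of_int \<bar>d\<bar> / (4 * \<sigma>)))"
  proof (rule sum_mono)
    fix d :: int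
    have "(real_of_int d) ^ (2 * n) * (gauss_weight N \<sigma> d)\<^sup>2
        \<le> (real_of_int d) ^ (2 * n) * (gauss \<sigma> (real_of_int d))\<^sup>2"
      by (intro mult_left_mono gauss_weight_squared_le) (simp add: power_mult)
    also have "\<dots> \<le> M * exp (- real_of_int \<bar>d\<bar> / (4 * \<sigma>))"
      using power_mult_gauss_squared_le[of \<sigma> "real_of_int d" n] assms by (simp add: M_def)
    finally show "(real_of_int d) ^ (2 * n) * (gauss_weight N \<sigma> d)\<^sup>2 \<le> \<dots>" .
  qed
  also have "\<dots> \<le> M * (2 * (1 + 4 * \<sigma>))"
    unfolding sum_distrib_left[symmetric] using assms \<open>M \<ge> 0\<close>
    by (intro mult_left_mono sum_exp_neg_abs_div_le finite_int_abs_le) auto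
  also have "\<dots> \<le> 10 * M * \<sigma>"
    using assms \<open>M \<ge> 0\<close> by (simp add: algebra_simps mult_left_mono)
  finally have "(\<Sum>d\<in>gauss_window \<sigma>. (real_of_int d) ^ (2 * n) * (gauss_weight N \<sigma> d)\<^sup>2)
      / (norm_const N \<sigma>)\<^sup>2 \<le> 3 * exp (1/2) * (10 * M)"
    by (intro divide_norm_const_squared_le assms sum_nonneg) (auto simp: power_mult)
  then show ?thesis
    by (simp add: coef_def power_divide sum_divide_distrib M_def mult_ac)
qed

lemma gauss_weight_shift_diff_squared_le:
  assumes "\<sigma> \<ge> 1" "even \<kappa>" "2 * \<bar>real_of_int \<kappa>\<bar> \<le> \<sigma>\<^sup>2"
  shows "(gauss_weight N \<sigma> d - gauss_weight N \<sigma> (d + \<kappa>))\<^sup>2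
    \<le> ((real_of_int \<kappa>)\<^sup>2 + 16) * exp (1/16 + \<bar>real_of_int \<kappa>\<bar> / 4) / \<sigma>\<^sup>2
       * exp (- real_of_int \<bar>d\<bar> / (8 * \<sigma>))"
    (is "?lhs \<le> ?K / \<sigma>\<^sup>2 * ?E")
proof -
  let ?x = "real_of_int d" and ?k = "real_of_int \<kappa>"
  have tail: "(gauss \<sigma> t)\<^sup>2 \<le> ?K / \<sigma>\<^sup>2 * ?E" if "\<bar>t\<bar> \<ge> \<sigma>\<^sup>2 / 2" "\<bar>t - ?x\<bar> \<le> \<bar>?k\<bar>" for t
  proof -
    have "16 * exp (\<bar>?k\<bar> / 8) \<le> ?K"
      by (intro mult_mono) auto
    then have "16 * exp (\<bar>?k\<bar> / 8) / \<sigma>\<^sup>2 * ?E \<le> ?K / \<sigma>\<^sup>2 * ?E"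
      by (intro mult_right_mono divide_right_mono) auto
    with gauss_squared_tail_shift_le[OF assms(1) that] show ?thesis by simp
  qed
  consider "odd (int N + d)"
    | "even (int N + d)" "\<bar>?x\<bar> \<le> \<sigma>\<^sup>2" "\<bar>?x + ?k\<bar> \<le> \<sigma>\<^sup>2"
    | "even (int N + d)" "\<bar>?x\<bar> \<le> \<sigma>\<^sup>2" "\<bar>?x + ?k\<bar> > \<sigma>\<^sup>2"
    | "even (int N + d)" "\<bar>?x\<bar> > \<sigma>\<^sup>2" "\<bar>?x + ?k\<bar> \<le> \<sigma>\<^sup>2"
    | "\<bar>?x\<bar> > \<sigma>\<^sup>2" "\<bar>?x + ?k\<bar> > \<sigma>\<^sup>2"
    by fastforce
  then show ?thesis
  proof cases
    case 1
    then show ?thesis using assms by (simp add: gauss_weight_def)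
  next
    case 2
    have "?lhs = (gauss \<sigma> ?x - gauss \<sigma> (?x + ?k))\<^sup>2"
      using 2 assms by (simp add: gauss_weight_eq_gauss)
    also have "\<dots> \<le> ?k\<^sup>2 * exp (1/16 + \<bar>?k\<bar> / 4) / \<sigma>\<^sup>2 * ?E"
      using gauss_shift_diff_squared_le[OF assms(1)] by simp
    also have "\<dots> \<le> ?K / \<sigma>\<^sup>2 * ?E"
      by (intro mult_right_mono divide_right_mono mult_right_mono) auto
    finally show ?thesis .
  next
    case 3
    have "?lhs = (gauss \<sigma> ?x)\<^sup>2"
      using 3 assms by (simp add: gauss_weight_eq_gauss)
    also have "\<dots> \<le> ?K / \<sigma>\<^sup>2 * ?E"
      by (rule tail) (use 3 assms in arith)+
    finally show ?thesis .
  next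
    case 4
    have "?lhs = (gauss \<sigma> (?x + ?k))\<^sup>2"
      using 4 assms by (simp add: gauss_weight_eq_gauss)
    also have "\<dots> \<le> ?K / \<sigma>\<^sup>2 * ?E"
      by (rule tail) (use 4 assms in arith)+
    finally show ?thesis .
  next
    case 5
    then show ?thesis by (simp add: gauss_weight_def)
  qed
qed

lemma sum_coef_shift_diff_squared_le:
  assumes "\<sigma> \<ge> 1" "even \<kappa>" "2 * \<bar>real_of_int \<kappa>\<bar> \<le> \<sigma>\<^sup>2" "finite T"
  shows "(\<Sum>d\<in>T. (coef N \<sigma> d - coef N \<sigma> (d + \<kappa>))\<^sup>2)
    \<le> 54 * exp (1/2) * (((real_of_int \<kappa>)\<^sup>2 + 16) * exp (1/16 + \<bar>real_of_int \<kappa>\<bar> / 4)) / \<sigma>\<^sup>2"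
proof -
  define K where "K = ((real_of_int \<kappa>)\<^sup>2 + 16) * exp (1/16 + \<bar>real_of_int \<kappa>\<bar> / 4)"
  have "K \<ge> 0" by (simp add: K_def)
  have "(\<Sum>d\<in>T. (gauss_weight N \<sigma> d - gauss_weight N \<sigma> (d + \<kappa>))\<^sup>2)
      \<le> (\<Sum>d\<in>T. K / \<sigma>\<^sup>2 * exp (- real_of_int \<bar>d\<bar> / (8 * \<sigma>)))"
    unfolding K_def by (intro sum_mono gauss_weight_shift_diff_squared_le assms)
  also have "\<dots> \<le> K / \<sigma>\<^sup>2 * (2 * (1 + 8 * \<sigma>))"
    unfolding sum_distrib_left[symmetric] using assms \<open>K \<ge> 0\<close>
    by (intro mult_left_mono sum_exp_neg_abs_div_le) auto
  also have "\<dots> \<le> K / \<sigma>\<^sup>2 * 18 * \<sigma>"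
    using mult_left_mono[of "2 * (1 + 8 * \<sigma>)" "18 * \<sigma>" "K / \<sigma>\<^sup>2"] assms \<open>K \<ge> 0\<close>
    by (simp add: mult.assoc)
  finally have "(\<Sum>d\<in>T. (gauss_weight N \<sigma> d - gauss_weight N \<sigma> (d + \<kappa>))\<^sup>2)
      / (norm_const N \<sigma>)\<^sup>2 \<le> 3 * exp (1/2) * (K / \<sigma>\<^sup>2 * 18)"
    by (intro divide_norm_const_squared_le assms sum_nonneg) auto
  then show ?thesis
    by (simp add: coef_def power_divide sum_divide_distrib K_def flip: diff_divide_distrib)
qed

lemma sum_coef_shift_squared:
  assumes "\<sigma> \<ge> 1" "finite T" "gauss_window \<sigma> \<subseteq> (\<lambda>d. d + \<kappa>) ` T"
  shows "(\<Sum>d\<in>T. (coef N \<sigma> (d + \<kappa>))\<^sup>2) = 1"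
proof -
  have "(\<Sum>d\<in>T. (coef N \<sigma> (d + \<kappa>))\<^sup>2) = (\<Sum>d\<in>(\<lambda>d. d + \<kappa>) ` T. (coef N \<sigma> d)\<^sup>2)"
    by (simp add: sum.reindex)
  also have "\<dots> = 1"
    using assms by (intro sum_coef_squared) auto
  finally show ?thesis .
qed

lemma sum_coef_mult_shift_extend:
  assumes "finite T" "{d. - (\<sigma>\<^sup>2) \<le> real_of_int d \<and> real_of_int d \<le> \<sigma>\<^sup>2 - real_of_int \<kappa>} \<subseteq> T"
  shows "(\<Sum>d\<in>{d. - (\<sigma>\<^sup>2) \<le> real_of_int d \<and> real_of_int d \<le> \<sigma>\<^sup>2 - real_of_int \<kappa>}.
      coef N \<sigma> d * coef N \<sigma> (d + \<kappa>)) = (\<Sum>d\<in>T. coef N \<sigma> d * coef N \<sigma> (d + \<kappa>))"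
proof (rule sum.mono_neutral_left[OF assms])
  show "\<forall>d\<in>T - {d. - (\<sigma>\<^sup>2) \<le> real_of_int d \<and> real_of_int d \<le> \<sigma>\<^sup>2 - real_of_int \<kappa>}.
      coef N \<sigma> d * coef N \<sigma> (d + \<kappa>) = 0"
  proof
    fix d
    assume "d \<in> T - {d. - (\<sigma>\<^sup>2) \<le> real_of_int d \<and> real_of_int d \<le> \<sigma>\<^sup>2 - real_of_int \<kappa>}"
    then have "\<sigma>\<^sup>2 < real_of_int \<bar>d\<bar> \<or> \<sigma>\<^sup>2 < real_of_int \<bar>d + \<kappa>\<bar>"
      by auto
    then show "coef N \<sigma> d * coef N \<sigma> (d + \<kappa>) = 0"
      by (auto simp: coef_eq_0)
  qed
qed

lemma sum_coef_mult_shift_deviation_le: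
  assumes "\<sigma> \<ge> 1" "even \<kappa>"
  shows "\<bar>(\<Sum>d\<in>{d. - (\<sigma>\<^sup>2) \<le> real_of_int d \<and> real_of_int d \<le> \<sigma>\<^sup>2 - real_of_int \<kappa>}.
      coef N \<sigma> d * coef N \<sigma> (d + \<kappa>)) - 1\<bar>
    \<le> (4 * \<bar>real_of_int \<kappa>\<bar>
        + 27 * exp (1/2) * (((real_of_int \<kappa>)\<^sup>2 + 16) * exp (1/16 + \<bar>real_of_int \<kappa>\<bar> / 4))) / \<sigma>\<^sup>2"
    (is "\<bar>?S - 1\<bar> \<le> (4 * \<bar>?k\<bar> + 27 * exp (1/2) * ?K) / \<sigma>\<^sup>2")
proof -
  let ?c = "coef N \<sigma>"
  define T where "T = {d. real_of_int \<bar>d\<bar> \<le> \<sigma>\<^sup>2 + \<bar>?k\<bar>}"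
  define D where "D = (\<Sum>d\<in>T. (?c d - ?c (d + \<kappa>))\<^sup>2)"
  have "finite T" unfolding T_def by (rule finite_int_abs_le)
  have sq: "(\<Sum>d\<in>T. (?c d)\<^sup>2) = 1"
    using assms \<open>finite T\<close> by (intro sum_coef_squared) (auto simp: T_def)
  have sq_shift: "(\<Sum>d\<in>T. (?c (d + \<kappa>))\<^sup>2) = 1"
    using assms \<open>finite T\<close>
    by (intro sum_coef_shift_squared) (force simp: T_def intro: image_eqI[where x = "_ - \<kappa>"])+
  have "?S = (\<Sum>d\<in>T. ?c d * ?c (d + \<kappa>))"
    using \<open>finite T\<close> by (intro sum_coef_mult_shift_extend) (auto simp: T_def)
  also have "\<dots> = 1 - D / 2"
    unfolding D_def by (rule sum_mult_eq_1_minus_half_sum_diff_squared[OF sq sq_shift])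
  finally have "\<bar>?S - 1\<bar> = D / 2"
    by (simp add: D_def sum_nonneg)
  show ?thesis
  proof (cases "2 * \<bar>?k\<bar> \<le> \<sigma>\<^sup>2")
    case True
    have "D \<le> 54 * exp (1/2) * ?K / \<sigma>\<^sup>2"
      unfolding D_def by (rule sum_coef_shift_diff_squared_le[OF assms True \<open>finite T\<close>])
    moreover have "27 * exp (1/2) * ?K / \<sigma>\<^sup>2 = (54 * exp (1/2) * ?K / \<sigma>\<^sup>2) / 2"
      by simp
    moreover have "0 \<le> 4 * \<bar>?k\<bar> / \<sigma>\<^sup>2"
      by simp
    ultimately show ?thesis
      using \<open>\<bar>?S - 1\<bar> = D / 2\<close> unfolding add_divide_distrib by linarith
  next
    case False
    have "\<bar>?S - 1\<bar> \<le> 2"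
      using sum_diff_squared_le[of ?c "\<lambda>d. ?c (d + \<kappa>)" T] sq sq_shift \<open>\<bar>?S - 1\<bar> = D / 2\<close>
      by (simp add: D_def)
    also have "2 \<le> 4 * \<bar>?k\<bar> / \<sigma>\<^sup>2"
      using False assms by (simp add: field_simps)
    also have "\<dots> \<le> (4 * \<bar>?k\<bar> + 27 * exp (1/2) * ?K) / \<sigma>\<^sup>2"
      by (intro divide_right_mono) auto
    finally show ?thesis .
  qed
qed

lemma int_interval_eq_gauss_window:
  "{d::int. - (\<sigma>\<^sup>2) \<le> real_of_int d \<and> real_of_int d \<le> \<sigma>\<^sup>2} = gauss_window \<sigma>"
  by (auto simp: abs_le_iff)

theorem lemma4p5:
  fixes C :: real
  shows "(\<forall>n::nat. \<exists>Cn::real. \<forall>(N::nat) (\<sigma>::real).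
            1 \<le> N \<and> 1 \<le> \<sigma> \<and> \<sigma> \<le> C * sqrt (real N) \<longrightarrow>
              (\<Sum>d\<in>{d::int. - (\<sigma>\<^sup>2) \<le> real_of_int d \<and> real_of_int d \<le> \<sigma>\<^sup>2}.
                  (real_of_int d) ^ (2 * n) * (coef N \<sigma> d)\<^sup>2) \<le> Cn * \<sigma> ^ (2 * n)
            \<and> (\<Sum>d\<in>{d::int. - (\<sigma>\<^sup>2) \<le> real_of_int d \<and> real_of_int d \<le> \<sigma>\<^sup>2}.
                  (real_of_int d) ^ (2 * n + 1) * (coef N \<sigma> d)\<^sup>2) = 0)
       \<and> (\<forall>\<kappa>::int. even \<kappa> \<longrightarrow> (\<exists>C\<kappa>::real. \<forall>(N::nat) (\<sigma>::real).
            1 \<le> N \<and> 1 \<le> \<sigma> \<and> \<sigma> \<le> C * sqrt (real N) \<longrightarrow>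
              \<bar>(\<Sum>d\<in>{d::int. - (\<sigma>\<^sup>2) \<le> real_of_int d \<and> real_of_int d \<le> \<sigma>\<^sup>2 - real_of_int \<kappa>}.
                  coef N \<sigma> d * coef N \<sigma> (d + \<kappa>)) - 1\<bar> \<le> C\<kappa> / \<sigma>\<^sup>2))"
  unfolding int_interval_eq_gauss_window
  apply (intro conjI allI impI)
  subgoal for n
    using sum_even_power_coef_squared_le sum_odd_power_coef_squared
    by (intro exI[of _ "30 * exp (1/2) * exp (1/16) * (4 * real n) ^ n"]) auto
  subgoal for \<kappa>
    using sum_coef_mult_shift_deviation_le
    by (intro exI[of _ "4 * \<bar>real_of_int \<kappa>\<bar>
        + 27 * exp (1/2) * (((real_of_int \<kappa>)\<^sup>2 + 16) * exp (1/16 + \<bar>real_of_int \<kappa>\<bar> / 4))"]) blast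
  done

end
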